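(* Let $H$ be a real Hilbert space, $a\in H$, $r>0$, and let $\{C_\alpha\}_{\alpha\in\Omega}$ ($|\Omega|\ge2$) be a family of closed convex subsets of $H$ each containing the closed ball $B(a,r)$. Let $C=\bigcap_\alpha C_\alpha$. (a) For every starting element $x_0\in H$ and every sequence $\{t_n\}\subset[0,1]$, every sequence $\{x_n\}$ of remote projections onto $\{C_\alpha\}$ with weakness parameters $\{t_n\}$ converges in norm. (b) If moreover $\sum_n t_n^2=\infty$, then the limit $w$ of $\{x_n\}$ belongs to $C$ and for every $n$, $$|x_n-w|\le 2|x_0-a|\prod_{k=0}^{n-1}\Bigl(1-\frac{t_k^2r^2}{|x_0-a|^2}\Bigr)^{1/2}.$$
   Context: $P_\alpha$ is the metric projection onto $C_\alpha$. A sequence of remote projections with weakness parameters $t_n\in[0,1]$ starting at $x_0$: $x_{n+1}=P_{\alpha(n)}x_n$, where $\alpha(n)\in\Omega$ is any index with $\mathrm{dist}(x_n,C_{\alpha(n)})\ge t_n\sup_\alpha\mathrm{dist}(x_n,C_\alpha)$; if $t_n=1$ for some $n$ it is required that $\max_\alpha\mathrm{dist}(x,C_\alpha)$ is attained for every $x\in H$. *)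

theory Defs
  imports "HOL-Analysis.Analysis"
begin

definition metric_proj :: "'a::{real_inner,complete_space} set \<Rightarrow> 'a \<Rightarrow> 'a" where
  "metric_proj S x = (THE p. p \<in> S \<and> (\<forall>y\<in>S. dist x p \<le> dist x y))"

definition remote_proj_seq ::
  "'i set \<Rightarrow> ('i \<Rightarrow> 'a::{real_inner,complete_space} set) \<Rightarrow> (nat \<Rightarrow> real) \<Rightarrow> (nat \<Rightarrow> 'i)
    \<Rightarrow> (nat \<Rightarrow> 'a) \<Rightarrow> bool" where
  "remote_proj_seq Omega C t alpha x \<longleftrightarrow>
     ((\<exists>n. t n = 1) \<longrightarrow>
        (\<forall>y. \<exists>\<beta>\<in>Omega. \<forall>\<gamma>\<in>Omega. infdist y (C \<gamma>) \<le> infdist y (C \<beta>))) \<and>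
     (\<forall>n. alpha n \<in> Omega \<and>
          infdist (x n) (C (alpha n)) \<ge> t n * (SUP \<beta>\<in>Omega. infdist (x n) (C \<beta>)) \<and>
          x (Suc n) = metric_proj (C (alpha n)) (x n))"

end

theory Submission
  imports Defs
begin

(* Projecting x onto a closed convex set that contains the ball B(a,r) decreases |x - a|^2 by
   at least |x - Px|^2 + 2r|x - Px|; hence the step lengths of any sequence of such projections
   are summable and the sequence converges, whatever the choice of sets.
   For the rate let delta_n = dist(x_n, C) and D_n = sup_alpha dist(x_n, C_alpha), so that
   t_n D_n <= |x_{n+1} - x_n|. Fejer monotonicity gives
   delta_{n+1}^2 <= delta_n^2 - |x_{n+1} - x_n|^2 and |x_n - lim x| <= 2 delta_n. Because every
   C_alpha contains the ball, moving from x_n towards a by the fraction D_n / (r + D_n) lands in C,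
   so r delta_n <= D_n |x_n - a| <= D_n |x_0 - a|. Combining,
   t_n r delta_n <= |x_0 - a| |x_{n+1} - x_n|, which yields the product bound on delta_n and,
   when sum t_n^2 diverges, delta_n -> 0, i.e. lim x in C. *)

lemma norm_diff_sq_le_if_convex:
  fixes S :: "'a::real_inner set"
  assumes "convex S" "y \<in> S" "z \<in> S"
  shows "(norm (y - z))\<^sup>2 \<le> 2 * (dist x y)\<^sup>2 + 2 * (dist x z)\<^sup>2 - 4 * (infdist x S)\<^sup>2"
proof -
  have "closed_segment y z \<subseteq> S"
    using assms by (simp add: convex_contains_segment)
  then have "midpoint y z \<in> S"
    using midpoint_in_closed_segment by blast
  then have "infdist x S \<le> norm (x - midpoint y z)"
    using infdist_le dist_norm by metis
  then have "(infdist x S)\<^sup>2 \<le> (norm (x - midpoint y z))\<^sup>2"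
    by (simp add: infdist_nonneg power_mono)
  moreover have "(norm (y - z))\<^sup>2
      = 2 * (norm (x - y))\<^sup>2 + 2 * (norm (x - z))\<^sup>2 - 4 * (norm (x - midpoint y z))\<^sup>2"
    by (simp add: midpoint_def power2_norm_eq_inner inner_diff_left inner_diff_right
        inner_add_left inner_add_right inner_commute algebra_simps)
  ultimately show ?thesis
    by (simp add: dist_norm)
qed

text \<open>The Hilbert projection theorem: a minimizing sequence is Cauchy by the parallelogram law.\<close>

lemma nearest_point_exists:
  fixes S :: "'a::{real_inner,complete_space} set"
  assumes "closed S" "convex S" "S \<noteq> {}"
  shows "\<exists>p\<in>S. \<forall>y\<in>S. dist x p \<le> dist x y"
proof -
  define d where "d = infdist x S"
  have "\<exists>y\<in>S. (dist x y)\<^sup>2 < d\<^sup>2 + inverse (Suc n)" for n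
  proof -
    have "d < sqrt (d\<^sup>2 + inverse (Suc n))"
      using infdist_nonneg[of x S] by (simp add: d_def real_less_rsqrt)
    then obtain y where "y \<in> S" "dist x y < sqrt (d\<^sup>2 + inverse (Suc n))"
      using assms(3) by (auto simp: d_def infdist_notempty cINF_less_iff)
    moreover have "(dist x y)\<^sup>2 < (sqrt (d\<^sup>2 + inverse (Suc n)))\<^sup>2"
      using \<open>dist x y < _\<close> by (intro power_strict_mono) auto
    ultimately show ?thesis
      by auto
  qed
  then obtain y where yS: "\<And>n. y n \<in> S"
    and y_close: "\<And>n. (dist x (y n))\<^sup>2 < d\<^sup>2 + inverse (Suc n)"
    by metis
  have "Cauchy y"
  proof (rule metric_CauchyI)
    fix e :: real
    assume "0 < e"
    then obtain N where "N > 0" "inverse (real N) < e\<^sup>2 / 4"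
      using ex_inverse_of_nat_less[of "e\<^sup>2 / 4"] by auto
    have "dist (y m) (y n) < e" if "N \<le> m" "N \<le> n" for m n
    proof -
      have inv_le: "inverse (real (Suc k)) \<le> inverse (real N)" if "N \<le> k" for k
        using that \<open>N > 0\<close> by (simp add: le_imp_inverse_le)
      have "(dist (y m) (y n))\<^sup>2 \<le> 2 * inverse (Suc m) + 2 * inverse (Suc n)"
        using norm_diff_sq_le_if_convex[OF assms(2) yS[of m] yS[of n], of x]
          y_close[of m] y_close[of n] by (simp add: d_def dist_norm)
      also have "\<dots> \<le> 4 * inverse (real N)"
        using inv_le[OF \<open>N \<le> m\<close>] inv_le[OF \<open>N \<le> n\<close>] by simp
      also have "\<dots> < e\<^sup>2"
        using \<open>inverse (real N) < e\<^sup>2 / 4\<close> by simp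
      finally show ?thesis
        using \<open>0 < e\<close> by (simp add: power_less_imp_less_base)
    qed
    then show "\<exists>M. \<forall>m\<ge>M. \<forall>n\<ge>M. dist (y m) (y n) < e"
      by blast
  qed
  then obtain p where y_lim: "y \<longlonglongrightarrow> p"
    using Cauchy_convergent_iff convergent_def by blast
  have "p \<in> S"
    using closed_sequentially[OF assms(1)] yS y_lim by blast
  have "(\<lambda>n. (dist x (y n))\<^sup>2) \<longlonglongrightarrow> (dist x p)\<^sup>2"
    by (intro tendsto_intros y_lim)
  moreover have "(\<lambda>n. d\<^sup>2 + inverse (real (Suc n))) \<longlonglongrightarrow> d\<^sup>2 + 0"
    by (intro tendsto_intros LIMSEQ_inverse_real_of_nat)
  ultimately have "(dist x p)\<^sup>2 \<le> d\<^sup>2"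
    using y_close by (intro LIMSEQ_le[where X = "\<lambda>n. (dist x (y n))\<^sup>2"]) (auto intro: less_imp_le)
  then have "dist x p \<le> d"
    using infdist_nonneg[of x S] by (simp add: d_def power2_le_iff_abs_le)
  then show ?thesis
    using \<open>p \<in> S\<close> infdist_le[of _ S x] by (force simp: d_def)
qed

lemma metric_proj_nearest:
  fixes S :: "'a::{real_inner,complete_space} set"
  assumes "closed S" "convex S" "S \<noteq> {}"
  shows metric_proj_in: "metric_proj S x \<in> S"
    and metric_proj_le: "y \<in> S \<Longrightarrow> dist x (metric_proj S x) \<le> dist x y"
proof -
  have "\<exists>!p. p \<in> S \<and> (\<forall>y\<in>S. dist x p \<le> dist x y)"
    using nearest_point_exists[OF assms] any_closest_point_unique[OF assms(2,1)] by blast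
  then have "metric_proj S x \<in> S \<and> (\<forall>y\<in>S. dist x (metric_proj S x) \<le> dist x y)"
    unfolding metric_proj_def by (rule theI')
  then show "metric_proj S x \<in> S" "y \<in> S \<Longrightarrow> dist x (metric_proj S x) \<le> dist x y"
    by auto
qed

lemma infdist_eq_dist_metric_proj:
  fixes S :: "'a::{real_inner,complete_space} set"
  assumes "closed S" "convex S" "S \<noteq> {}"
  shows "infdist x S = dist x (metric_proj S x)"
proof (rule antisym)
  show "infdist x S \<le> dist x (metric_proj S x)"
    using metric_proj_in[OF assms] by (rule infdist_le)
  show "dist x (metric_proj S x) \<le> infdist x S"
    using metric_proj_le[OF assms] assms(3) by (simp add: infdist_notempty cINF_greatest)
qed

lemma metric_proj_inner_le:
  fixes S :: "'a::{real_inner,complete_space} set"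
  assumes "closed S" "convex S" "z \<in> S"
  shows "inner (x - metric_proj S x) (z - metric_proj S x) \<le> 0"
proof -
  have "S \<noteq> {}"
    using assms(3) by blast
  then show ?thesis
    using assms metric_proj_nearest[OF assms(1,2)]
    by (intro any_closest_point_dot[OF assms(2,1)]) auto
qed

lemma metric_proj_pythagoras:
  fixes S :: "'a::{real_inner,complete_space} set" and x :: 'a
  assumes "closed S" "convex S" "z \<in> S"
  defines "p \<equiv> metric_proj S x"
  shows "(norm (x - p))\<^sup>2 + (norm (p - z))\<^sup>2 \<le> (norm (x - z))\<^sup>2"
proof -
  have "(norm (x - z))\<^sup>2 = (norm (x - p))\<^sup>2 + (norm (p - z))\<^sup>2 - 2 * inner (x - p) (z - p)"
    by (simp add: power2_norm_eq_inner inner_diff_left inner_diff_right inner_commute)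
  then show ?thesis
    using metric_proj_inner_le[OF assms(1-3), of x] by (simp add: p_def)
qed

text \<open>Testing the variational inequality against the point of the ball farthest from p in the
  direction x - p yields the extra term 2 r |x - p|.\<close>

lemma metric_proj_dist_center_sq_le:
  fixes S :: "'a::{real_inner,complete_space} set" and x :: 'a
  assumes "closed S" "convex S" "cball a r \<subseteq> S" "0 \<le> r"
  defines "p \<equiv> metric_proj S x"
  shows "(norm (p - a))\<^sup>2 + (norm (x - p))\<^sup>2 + 2 * r * norm (x - p) \<le> (norm (x - a))\<^sup>2"
proof -
  have "r * norm (x - p) \<le> inner (x - p) (p - a)"
  proof (cases "x = p")
    case False
    define z where "z = a + (r / norm (x - p)) *\<^sub>R (x - p)"
    have "z \<in> S"
      using False assms(3,4) by (auto simp: z_def dist_norm)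
    then have "inner (x - p) (z - p) \<le> 0"
      using metric_proj_inner_le[OF assms(1,2)] by (simp add: p_def)
    moreover have "z - p = (r / norm (x - p)) *\<^sub>R (x - p) - (p - a)"
      by (simp add: z_def algebra_simps)
    then have "inner (x - p) (z - p)
        = r / norm (x - p) * inner (x - p) (x - p) - inner (x - p) (p - a)"
      by (simp only: inner_diff_right inner_scaleR_right)
    then have "inner (x - p) (z - p) = r * norm (x - p) - inner (x - p) (p - a)"
      by (simp add: power2_norm_eq_inner[symmetric] power2_eq_square)
    ultimately show ?thesis
      by simp
  qed simp
  moreover have "(norm (x - a))\<^sup>2
      = (norm (x - p))\<^sup>2 + (norm (p - a))\<^sup>2 + 2 * inner (x - p) (p - a)"
    by (simp add: power2_norm_eq_inner inner_diff_left inner_diff_right inner_commute)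
  ultimately show ?thesis
    by simp
qed

text \<open>The point c that divides the segment from x to a in the ratio D : r is a convex combination
  of the nearest point of C \<beta> and a point of the ball, so it lies in every C \<beta>.\<close>

lemma infdist_Inter_cball_le:
  fixes C :: "'i \<Rightarrow> 'a::{real_inner,complete_space} set"
  assumes C: "\<And>\<beta>. \<beta> \<in> I \<Longrightarrow> closed (C \<beta>) \<and> convex (C \<beta>) \<and> cball a r \<subseteq> C \<beta>"
    and "0 \<le> r"
    and D: "\<And>\<beta>. \<beta> \<in> I \<Longrightarrow> infdist x (C \<beta>) \<le> D" "0 \<le> D"
  shows "(r + D) * infdist x (\<Inter>\<beta>\<in>I. C \<beta>) \<le> D * norm (x - a)"
proof (cases "D = 0")
  case True
  have "x \<in> C \<beta>" if "\<beta> \<in> I" for \<beta>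
    using C[OF that] D(1)[OF that] True \<open>0 \<le> r\<close> in_closed_iff_infdist_zero[of "C \<beta>" x]
    by (force simp: antisym infdist_nonneg)
  then show ?thesis
    using True by simp
next
  case False
  then have "0 < D"
    using D(2) by simp
  define c where "c = (r / (r + D)) *\<^sub>R x + (D / (r + D)) *\<^sub>R a"
  have "c \<in> C \<beta>" if "\<beta> \<in> I" for \<beta>
  proof -
    have cl: "closed (C \<beta>)" and cv: "convex (C \<beta>)" and ball: "cball a r \<subseteq> C \<beta>"
      using C[OF that] by auto
    then have ne: "C \<beta> \<noteq> {}"
      using \<open>0 \<le> r\<close> by auto
    define q where "q = metric_proj (C \<beta>) x"
    have "q \<in> C \<beta>"
      using metric_proj_in[OF cl cv ne] by (simp add: q_def)
    have "norm (x - q) \<le> D"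
      using infdist_eq_dist_metric_proj[OF cl cv ne, of x] D(1)[OF that]
      by (simp add: q_def dist_norm)
    define b where "b = a + (r / D) *\<^sub>R (x - q)"
    have "dist a b \<le> r"
      using mult_left_mono[OF \<open>norm (x - q) \<le> D\<close>, of "r / D"] \<open>0 < D\<close> \<open>0 \<le> r\<close>
      by (simp add: b_def dist_norm)
    then have "b \<in> C \<beta>"
      using ball by auto
    have "c = (r / (r + D)) *\<^sub>R q + (D / (r + D)) *\<^sub>R b"
      using \<open>0 < D\<close> \<open>0 \<le> r\<close> by (simp add: c_def b_def algebra_simps)
    also have "\<dots> \<in> C \<beta>"
      using \<open>0 < D\<close> \<open>0 \<le> r\<close> \<open>q \<in> C \<beta>\<close> \<open>b \<in> C \<beta>\<close>
      by (intro convexD[OF cv]) (auto simp: add_divide_distrib[symmetric])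
    finally show ?thesis .
  qed
  then have "infdist x (\<Inter>\<beta>\<in>I. C \<beta>) \<le> norm (x - c)"
    by (metis INT_I dist_norm infdist_le)
  also have "x - c = (1 - r / (r + D)) *\<^sub>R x - (D / (r + D)) *\<^sub>R a"
    by (simp add: c_def scaleR_diff_left)
  also have "1 - r / (r + D) = D / (r + D)"
    using \<open>0 < D\<close> \<open>0 \<le> r\<close> by (simp add: field_simps)
  finally have "infdist x (\<Inter>\<beta>\<in>I. C \<beta>) \<le> D / (r + D) * norm (x - a)"
    using \<open>0 < D\<close> \<open>0 \<le> r\<close> by (simp flip: scaleR_diff_right)
  then have "(r + D) * infdist x (\<Inter>\<beta>\<in>I. C \<beta>) \<le> (r + D) * (D / (r + D) * norm (x - a))"
    using \<open>0 < D\<close> \<open>0 \<le> r\<close> by (intro mult_left_mono) auto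
  then show ?thesis
    using \<open>0 < D\<close> \<open>0 \<le> r\<close> by simp
qed

lemma le_prod_if_le_mult_Suc:
  fixes \<delta> q :: "nat \<Rightarrow> real"
  assumes "\<And>k. k < n \<Longrightarrow> \<delta> (Suc k) \<le> \<delta> k * q k" "\<And>k. k < n \<Longrightarrow> 0 \<le> q k"
  shows "\<delta> n \<le> \<delta> 0 * (\<Prod>k<n. q k)"
  using assms
proof (induction n)
  case (Suc n)
  have "\<delta> (Suc n) \<le> \<delta> n * q n"
    using Suc.prems(1) by simp
  also have "\<dots> \<le> \<delta> 0 * (\<Prod>k<n. q k) * q n"
    using Suc by (intro mult_right_mono) auto
  finally show ?case
    by (simp add: mult.assoc)
qed simp

lemma dist_le_sum_dist_Suc:
  fixes x :: "nat \<Rightarrow> 'a::metric_space"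
  assumes "m \<le> n"
  shows "dist (x m) (x n) \<le> (\<Sum>k=m..<n. dist (x (Suc k)) (x k))"
  using assms
proof (induction n rule: dec_induct)
  case (step n)
  have "dist (x m) (x (Suc n)) \<le> dist (x m) (x n) + dist (x (Suc n)) (x n)"
    by (rule dist_triangle2)
  then show ?case
    using step by simp
qed simp

lemma Cauchy_if_summable_dist_Suc:
  fixes x :: "nat \<Rightarrow> 'a::metric_space"
  assumes "summable (\<lambda>n. dist (x (Suc n)) (x n))"
  shows "Cauchy x"
proof (rule metric_CauchyI)
  fix e :: real
  assume "0 < e"
  then obtain N where N: "\<And>m n. N \<le> m \<Longrightarrow> norm (\<Sum>k=m..<n. dist (x (Suc k)) (x k)) < e"
    using assms unfolding summable_Cauchy by blast
  have "dist (x m) (x n) < e" if "N \<le> m" "m \<le> n" for m n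
    using dist_le_sum_dist_Suc[OF \<open>m \<le> n\<close>, of x] N[OF \<open>N \<le> m\<close>, of n] by simp
  then show "\<exists>M. \<forall>m\<ge>M. \<forall>n\<ge>M. dist (x m) (x n) < e"
    by (metis dist_commute nle_le)
qed

locale cball_projections =
  fixes S :: "nat \<Rightarrow> 'a::{real_inner,complete_space} set" and a :: 'a and r :: real
    and x :: "nat \<Rightarrow> 'a"
  assumes r_pos: "0 < r"
    and closed_S: "\<And>n. closed (S n)" and convex_S: "\<And>n. convex (S n)"
    and cball_subset_S: "\<And>n. cball a r \<subseteq> S n"
    and x_Suc: "\<And>n. x (Suc n) = metric_proj (S n) (x n)"
begin

lemma norm_diff_center_Suc:
  "(norm (x (Suc n) - a))\<^sup>2 + (norm (x (Suc n) - x n))\<^sup>2 + 2 * r * norm (x (Suc n) - x n)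
     \<le> (norm (x n - a))\<^sup>2"
  using metric_proj_dist_center_sq_le[OF closed_S convex_S cball_subset_S less_imp_le[OF r_pos],
      where x = "x n"]
  by (simp add: x_Suc norm_minus_commute)

lemma norm_diff_center_sum_steps:
  "(norm (x n - a))\<^sup>2 + (\<Sum>k<n. 2 * r * norm (x (Suc k) - x k) + (norm (x (Suc k) - x k))\<^sup>2)
     \<le> (norm (x 0 - a))\<^sup>2"
proof (induction n)
  case (Suc n)
  then show ?case
    using norm_diff_center_Suc[of n] by simp
qed simp

lemma norm_diff_center_le: "norm (x n - a) \<le> norm (x 0 - a)"
proof -
  have "0 \<le> (\<Sum>k<n. 2 * r * norm (x (Suc k) - x k) + (norm (x (Suc k) - x k))\<^sup>2)"
    using r_pos by (intro sum_nonneg) auto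
  then have "(norm (x n - a))\<^sup>2 \<le> (norm (x 0 - a))\<^sup>2"
    using norm_diff_center_sum_steps[of n] by linarith
  then show ?thesis
    by (simp add: power2_le_iff_abs_le)
qed

lemma summable_steps: "summable (\<lambda>n. norm (x (Suc n) - x n))"
proof (rule summableI_nonneg_bounded)
  fix n
  have "2 * r * (\<Sum>k<n. norm (x (Suc k) - x k))
      \<le> (\<Sum>k<n. 2 * r * norm (x (Suc k) - x k) + (norm (x (Suc k) - x k))\<^sup>2)"
    by (simp add: sum_distrib_left sum_mono)
  also have "\<dots> \<le> (norm (x 0 - a))\<^sup>2"
    using norm_diff_center_sum_steps[of n] zero_le_power2[of "norm (x n - a)"] by linarith
  finally show "(\<Sum>k<n. norm (x (Suc k) - x k)) \<le> (norm (x 0 - a))\<^sup>2 / (2 * r)"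
    using r_pos by (simp add: field_simps)
qed simp

lemma summable_steps_sq: "summable (\<lambda>n. (norm (x (Suc n) - x n))\<^sup>2)"
proof (rule summableI_nonneg_bounded)
  fix n
  have "(\<Sum>k<n. (norm (x (Suc k) - x k))\<^sup>2)
      \<le> (\<Sum>k<n. 2 * r * norm (x (Suc k) - x k) + (norm (x (Suc k) - x k))\<^sup>2)"
    using r_pos by (intro sum_mono) auto
  also have "\<dots> \<le> (norm (x 0 - a))\<^sup>2"
    using norm_diff_center_sum_steps[of n] zero_le_power2[of "norm (x n - a)"] by linarith
  finally show "(\<Sum>k<n. (norm (x (Suc k) - x k))\<^sup>2) \<le> (norm (x 0 - a))\<^sup>2" .
qed simp

lemma convergent_iterates: "convergent x"
  using Cauchy_if_summable_dist_Suc[of x, unfolded dist_norm, OF summable_steps]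
  by (simp add: Cauchy_convergent_iff)

context
  fixes K :: "'a set"
  assumes K: "closed K" "convex K" "K \<noteq> {}" and K_subset_S: "\<And>n. K \<subseteq> S n"
begin

lemma infdist_Suc_sq:
  "(infdist (x (Suc n)) K)\<^sup>2 + (norm (x (Suc n) - x n))\<^sup>2 \<le> (infdist (x n) K)\<^sup>2"
proof -
  define z where "z = metric_proj K (x n)"
  have "z \<in> S n"
    using metric_proj_in[OF K] K_subset_S by (auto simp: z_def)
  have "infdist (x (Suc n)) K \<le> norm (x (Suc n) - z)"
    using metric_proj_in[OF K] by (metis z_def dist_norm infdist_le)
  then have "(infdist (x (Suc n)) K)\<^sup>2 \<le> (norm (x (Suc n) - z))\<^sup>2"
    by (simp add: infdist_nonneg power_mono)
  moreover have "(norm (x n - x (Suc n)))\<^sup>2 + (norm (x (Suc n) - z))\<^sup>2 \<le> (norm (x n - z))\<^sup>2"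
    using metric_proj_pythagoras[OF closed_S convex_S \<open>z \<in> S n\<close>] by (simp add: x_Suc)
  moreover have "norm (x n - z) = infdist (x n) K"
    using infdist_eq_dist_metric_proj[OF K] by (simp add: z_def dist_norm)
  ultimately show ?thesis
    by (simp add: norm_minus_commute)
qed

lemma decseq_infdist: "decseq (\<lambda>n. infdist (x n) K)"
proof (rule decseq_SucI)
  fix n
  have "(infdist (x (Suc n)) K)\<^sup>2 \<le> (infdist (x n) K)\<^sup>2"
    using infdist_Suc_sq[of n] zero_le_power2[of "norm (x (Suc n) - x n)"] by linarith
  then show "infdist (x (Suc n)) K \<le> infdist (x n) K"
    by (simp add: power2_le_iff_abs_le infdist_nonneg)
qed

lemma norm_diff_lim_le_infdist: "norm (x n - lim x) \<le> 2 * infdist (x n) K"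
proof -
  define z where "z = metric_proj K (x n)"
  have "z \<in> S m" for m
    using metric_proj_in[OF K] K_subset_S by (auto simp: z_def)
  have "(norm (x (Suc m) - z))\<^sup>2 \<le> (norm (x m - z))\<^sup>2" for m
    using metric_proj_pythagoras[OF closed_S convex_S \<open>z \<in> S m\<close>, where x = "x m"]
      zero_le_power2[of "norm (x m - x (Suc m))"] unfolding x_Suc by linarith
  then have "norm (x (Suc m) - z) \<le> norm (x m - z)" for m
    by (simp add: power2_le_iff_abs_le)
  then have "decseq (\<lambda>m. norm (x m - z))"
    by (rule decseq_SucI)
  moreover have "(\<lambda>m. norm (x m - z)) \<longlonglongrightarrow> norm (lim x - z)"
    using convergent_iterates by (intro tendsto_intros) (simp add: convergent_LIMSEQ_iff)
  ultimately have "norm (lim x - z) \<le> norm (x n - z)"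
    by (rule decseq_ge)
  then have "norm (x n - lim x) \<le> 2 * norm (x n - z)"
    using norm_triangle_ineq4[of "x n - z" "lim x - z"] by simp
  also have "norm (x n - z) = infdist (x n) K"
    using infdist_eq_dist_metric_proj[OF K] by (simp add: z_def dist_norm)
  finally show ?thesis .
qed

end

end

locale remote_projections =
  fixes Omega :: "'i set" and C :: "'i \<Rightarrow> 'a::{real_inner,complete_space} set"
    and a :: 'a and r :: real and t :: "nat \<Rightarrow> real" and alpha :: "nat \<Rightarrow> 'i"
    and x :: "nat \<Rightarrow> 'a"
  assumes r_pos: "0 < r" and Omega_nonempty: "Omega \<noteq> {}"
    and C: "\<And>\<beta>. \<beta> \<in> Omega \<Longrightarrow> closed (C \<beta>) \<and> convex (C \<beta>) \<and> cball a r \<subseteq> C \<beta>"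
    and t_nonneg: "\<And>n. 0 \<le> t n"
    and remote_proj_seq: "remote_proj_seq Omega C t alpha x"
begin

abbreviation C_Inter :: "'a set" where "C_Inter \<equiv> \<Inter>\<beta>\<in>Omega. C \<beta>"

lemma alpha_in: "alpha n \<in> Omega"
  and remote_choice:
    "t n * (SUP \<beta>\<in>Omega. infdist (x n) (C \<beta>)) \<le> infdist (x n) (C (alpha n))"
  using remote_proj_seq by (auto simp: remote_proj_seq_def)

lemma center_in_C: "\<beta> \<in> Omega \<Longrightarrow> a \<in> C \<beta>"
  using C[of \<beta>] r_pos by (meson centre_in_cball less_imp_le subsetD)

sublocale cball_projections "\<lambda>n. C (alpha n)" a r x
  using r_pos C[OF alpha_in] remote_proj_seq by unfold_locales (auto simp: remote_proj_seq_def)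

lemma infdist_C_alpha: "infdist (x n) (C (alpha n)) = norm (x (Suc n) - x n)"
  using infdist_eq_dist_metric_proj[of "C (alpha n)" "x n"] C[OF alpha_in]
    center_in_C[OF alpha_in] by (auto simp: x_Suc dist_norm norm_minus_commute)

lemma center_in_C_Inter: "a \<in> C_Inter"
  using center_in_C by blast

lemma C_Inter: "closed C_Inter" "convex C_Inter" "C_Inter \<noteq> {}" "C_Inter \<subseteq> C (alpha n)"
  using C alpha_in center_in_C_Inter by (auto intro!: closed_INT convex_INT)

lemma remote_step:
  "t n * r * infdist (x n) C_Inter \<le> norm (x 0 - a) * norm (x (Suc n) - x n)"
proof -
  define D where "D = (SUP \<beta>\<in>Omega. infdist (x n) (C \<beta>))"
  have "bdd_above ((\<lambda>\<beta>. infdist (x n) (C \<beta>)) ` Omega)"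
    using center_in_C by (intro bdd_aboveI2[where M = "dist (x n) a"] infdist_le)
  then have infdist_le_D: "infdist (x n) (C \<beta>) \<le> D" if "\<beta> \<in> Omega" for \<beta>
    using that by (auto simp: D_def intro: cSUP_upper)
  then have "0 \<le> D"
    using Omega_nonempty infdist_nonneg by (meson all_not_in_conv order_trans)
  have "r * infdist (x n) C_Inter \<le> (r + D) * infdist (x n) C_Inter"
    using \<open>0 \<le> D\<close> by (simp add: infdist_nonneg mult_right_mono)
  also have "\<dots> \<le> D * norm (x n - a)"
    using infdist_Inter_cball_le[OF C _ infdist_le_D \<open>0 \<le> D\<close>] r_pos by simp
  also have "\<dots> \<le> D * norm (x 0 - a)"
    using norm_diff_center_le \<open>0 \<le> D\<close> by (rule mult_left_mono)
  finally have "t n * r * infdist (x n) C_Inter \<le> (t n * D) * norm (x 0 - a)"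
    using t_nonneg by (simp add: mult_left_mono mult.assoc)
  also have "\<dots> \<le> norm (x (Suc n) - x n) * norm (x 0 - a)"
    using remote_choice[of n] by (intro mult_right_mono) (simp_all add: D_def infdist_C_alpha)
  finally show ?thesis
    by (simp add: mult.commute)
qed

lemma infdist_Suc_le:
  "infdist (x (Suc n)) C_Inter
     \<le> infdist (x n) C_Inter * sqrt (1 - (t n)\<^sup>2 * r\<^sup>2 / (norm (x 0 - a))\<^sup>2)"
proof -
  define \<delta> where "\<delta> k = infdist (x k) C_Inter" for k
  define R where "R = norm (x 0 - a)"
  define s where "s = (t n)\<^sup>2 * r\<^sup>2 / R\<^sup>2"
  have "(\<delta> n)\<^sup>2 * s \<le> (norm (x (Suc n) - x n))\<^sup>2"
  proof (cases "R = 0")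
    case False
    have "(t n * r * \<delta> n)\<^sup>2 \<le> (R * norm (x (Suc n) - x n))\<^sup>2"
      using remote_step[of n] t_nonneg[of n] r_pos
      by (intro power_mono) (auto simp: \<delta>_def R_def infdist_nonneg)
    then show ?thesis
      using False by (simp add: s_def power_mult_distrib pos_divide_le_eq mult_ac)
  qed (simp add: s_def)
  then have "(\<delta> (Suc n))\<^sup>2 \<le> (\<delta> n)\<^sup>2 * (1 - s)"
    using infdist_Suc_sq[OF C_Inter, of n] by (simp add: \<delta>_def right_diff_distrib)
  then have "sqrt ((\<delta> (Suc n))\<^sup>2) \<le> sqrt ((\<delta> n)\<^sup>2 * (1 - s))"
    by (rule real_sqrt_le_mono)
  then show ?thesis
    by (simp add: \<delta>_def R_def s_def real_sqrt_mult infdist_nonneg)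
qed

lemma infdist_le_prod:
  assumes "\<forall>k<n. (t k)\<^sup>2 * r\<^sup>2 \<le> (norm (x 0 - a))\<^sup>2"
  shows "infdist (x n) C_Inter
    \<le> norm (x 0 - a) * (\<Prod>k<n. sqrt (1 - (t k)\<^sup>2 * r\<^sup>2 / (norm (x 0 - a))\<^sup>2))"
proof -
  have factor_nonneg: "0 \<le> sqrt (1 - (t k)\<^sup>2 * r\<^sup>2 / (norm (x 0 - a))\<^sup>2)" if "k < n" for k
    using assms that by (auto simp: divide_le_eq_1)
  have "infdist (x n) C_Inter
      \<le> infdist (x 0) C_Inter * (\<Prod>k<n. sqrt (1 - (t k)\<^sup>2 * r\<^sup>2 / (norm (x 0 - a))\<^sup>2))"
    using infdist_Suc_le factor_nonneg by (rule le_prod_if_le_mult_Suc)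
  also have "\<dots> \<le> norm (x 0 - a) * (\<Prod>k<n. sqrt (1 - (t k)\<^sup>2 * r\<^sup>2 / (norm (x 0 - a))\<^sup>2))"
    using infdist_le[OF center_in_C_Inter, of "x 0"] factor_nonneg
    by (intro mult_right_mono prod_nonneg) (auto simp: dist_norm)
  finally show ?thesis .
qed

lemma norm_diff_lim_le_prod:
  assumes "\<forall>k<n. (t k)\<^sup>2 * r\<^sup>2 \<le> (norm (x 0 - a))\<^sup>2"
  shows "norm (x n - lim x)
    \<le> 2 * norm (x 0 - a) * (\<Prod>k<n. sqrt (1 - (t k)\<^sup>2 * r\<^sup>2 / (norm (x 0 - a))\<^sup>2))"
  using norm_diff_lim_le_infdist[OF C_Inter, of n] infdist_le_prod[OF assms] by simp

lemma lim_in_C_Inter: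
  assumes "\<not> summable (\<lambda>n. (t n)\<^sup>2)"
  shows "lim x \<in> C_Inter"
proof -
  define e where "e = infdist (lim x) C_Inter"
  have "(\<lambda>n. infdist (x n) C_Inter) \<longlonglongrightarrow> e"
    using convergent_iterates unfolding e_def
    by (intro tendsto_infdist) (simp add: convergent_LIMSEQ_iff)
  with decseq_infdist[OF C_Inter] have e_le: "e \<le> infdist (x n) C_Inter" for n
    by (rule decseq_ge)
  have "e = 0"
  proof (rule ccontr)
    assume "e \<noteq> 0"
    then have "0 < e"
      using infdist_nonneg[of "lim x"] by (simp add: e_def order_less_le)
    define R where "R = norm (x 0 - a)"
    have bound: "(t n)\<^sup>2 \<le> (R / (r * e))\<^sup>2 * (norm (x (Suc n) - x n))\<^sup>2" for n
    proof -
      have "t n * r * e \<le> t n * r * infdist (x n) C_Inter"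
        using e_le t_nonneg r_pos by (simp add: mult_left_mono)
      also have "\<dots> \<le> R * norm (x (Suc n) - x n)"
        using remote_step by (simp add: R_def)
      finally have "(t n * (r * e))\<^sup>2 \<le> (R * norm (x (Suc n) - x n))\<^sup>2"
        using t_nonneg[of n] r_pos \<open>0 < e\<close> by (intro power_mono) (simp_all add: mult.assoc)
      then show ?thesis
        using r_pos \<open>0 < e\<close> by (simp add: power_mult_distrib power_divide field_simps)
    qed
    have "summable (\<lambda>n. (R / (r * e))\<^sup>2 * (norm (x (Suc n) - x n))\<^sup>2)"
      using summable_steps_sq by (rule summable_mult)
    then have "summable (\<lambda>n. (t n)\<^sup>2)"
      by (rule summable_comparison_test'[where N = 0]) (simp add: bound)
    with assms show False ..
  qed
  then show ?thesis
    using in_closed_iff_infdist_zero[OF C_Inter(1,3)] by (simp add: e_def)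
qed

end

theorem mainTheorem6:
  fixes Omega :: "'i set" and C :: "'i \<Rightarrow> 'a::{real_inner,complete_space} set"
    and a :: 'a and r :: real and t :: "nat \<Rightarrow> real" and alpha :: "nat \<Rightarrow> 'i"
    and x :: "nat \<Rightarrow> 'a"
  assumes "r > 0"
    and "\<exists>\<alpha>\<in>Omega. \<exists>\<beta>\<in>Omega. \<alpha> \<noteq> \<beta>"
    and "\<And>\<alpha>. \<alpha> \<in> Omega \<Longrightarrow> closed (C \<alpha>) \<and> convex (C \<alpha>) \<and> cball a r \<subseteq> C \<alpha>"
    and "\<And>n. 0 \<le> t n \<and> t n \<le> 1"
    and "remote_proj_seq Omega C t alpha x"
  shows "convergent x \<and>
    (\<not> summable (\<lambda>n. (t n)\<^sup>2) \<longrightarrow>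
       lim x \<in> (\<Inter>\<alpha>\<in>Omega. C \<alpha>) \<and>
       (\<forall>n. (\<forall>k<n. (t k)\<^sup>2 * r\<^sup>2 \<le> (norm (x 0 - a))\<^sup>2) \<longrightarrow>
          norm (x n - lim x) \<le> 2 * norm (x 0 - a) *
             (\<Prod>k<n. sqrt (1 - (t k)\<^sup>2 * r\<^sup>2 / (norm (x 0 - a))\<^sup>2))))"
proof -
  interpret remote_projections Omega C a r t alpha x
    using assms by unfold_locales auto
  show ?thesis
    using convergent_iterates lim_in_C_Inter norm_diff_lim_le_prod by blast
qed

end
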